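(* Let $n\ge 1$. As polynomials in the indeterminates $x$ and $y$ with coefficients in $\mathbb{Q}[\mathfrak{S}_n]$, \[\rho^{(\ell)}(x)\rho^{(\ell)}(y)=\rho^{(\ell)}(xy),\qquad \rho^{(r)}(x)\rho^{(r)}(y)=\rho^{(\ell)}(xy),\qquad \rho^{(\ell)}(x)\rho^{(r)}(y)=\rho^{(r)}(xy),\qquad \rho^{(r)}(x)\rho^{(\ell)}(y)=\rho^{(r)}(xy),\] where $\rho^{(\ell)}(x)=\sum_{\pi\in\mathfrak{S}_n}\Omega^{(\ell)}(\pi;(x-1)/2)\,\pi$ and $\rho^{(r)}(x)=\sum_{\pi\in\mathfrak{S}_n}\Omega^{(r)}(\pi;(x-1)/2)\,\pi$.
   Context: $\mathfrak{S}_n$ is the symmetric group on $[n]$, permutations are words $(\pi(1),\dots,\pi(n))$, and multiplication in $\mathbb{Q}[\mathfrak{S}_n]$ is composition $(\sigma\tau)(i)=\sigma(\tau(i))$. Let $Z$ be a finite totally ordered set each of whose elements is declared "plus-type" or "minus-type". For $\pi\in\mathfrak{S}_n$ let $N(\pi;Z)$ be the number of sequences $(a_1,\dots,a_n)\in Z^n$ with $a_1\le\dots\le a_n$ such that for every $s\in[n-1]$: if $\pi(s)<\pi(s+1)$ then $a_s<a_{s+1}$ or ($a_s=a_{s+1}$ is plus-type); if $\pi(s)>\pi(s+1)$ then $a_s<a_{s+1}$ or ($a_s=a_{s+1}$ is minus-type). For a positive integer $k$ define the left enriched order polynomial $\Omega^{(\ell)}(\pi;k)=N(\pi;Z)$ with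 $Z=\{0<\bar1<1<\bar2<2<\dots<\bar k<k\}$ and the right enriched order polynomial $\Omega^{(r)}(\pi;k)=N(\pi;Z)$ with $Z=\{\bar1<1<\bar2<2<\dots<\bar k<k<\overline{k+1}\}$, where $0$ and the unbarred $j$ are plus-type and barred elements $\bar j$ are minus-type. As functions of $k$ these are restrictions of unique polynomials with rational coefficients, denoted by the same symbols; these polynomials are evaluated at $(x-1)/2$ above. *)

theory Defs
  imports "HOL-Combinatorics.Permutations" "HOL-Computational_Algebra.Polynomial"
begin

text \<open>Permutations of [n] are functions nat => nat that permute {1..n}.
  Elements of the group algebra Q[S_n] are functions (nat => nat) => rat,
  the coefficient of pi, zero outside S_n.\<close>

definition Sn :: "nat \<Rightarrow> (nat \<Rightarrow> nat) set" where
  "Sn n = {p. p permutes {1..n}}"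

definition gmult :: "nat \<Rightarrow> ((nat \<Rightarrow> nat) \<Rightarrow> rat) \<Rightarrow> ((nat \<Rightarrow> nat) \<Rightarrow> rat) \<Rightarrow> ((nat \<Rightarrow> nat) \<Rightarrow> rat)" where
  "gmult n a b = (\<lambda>p. if p \<in> Sn n then
      (\<Sum>s\<in>Sn n. \<Sum>t\<in>Sn n. if s \<circ> t = p then a s * b t else 0) else 0)"

text \<open>N(pi;Z) where Z = {0 < 1 < ... < m-1} (an order-isomorphic copy),
  and isplus z says whether z is plus-type. Sequences a_1..a_n are functions
  on {1..n} (extensional, undefined = 0 outside).\<close>
definition Ncount :: "nat \<Rightarrow> nat \<Rightarrow> (nat \<Rightarrow> bool) \<Rightarrow> (nat \<Rightarrow> nat) \<Rightarrow> nat" where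
  "Ncount n m isplus p = card {a \<in> {1..n} \<rightarrow>\<^sub>E {..<m}.
      (\<forall>s\<in>{1..<n}. a s \<le> a (Suc s)) \<and>
      (\<forall>s\<in>{1..<n}. p s < p (Suc s) \<longrightarrow>
           (a s < a (Suc s) \<or> (a s = a (Suc s) \<and> isplus (a s)))) \<and>
      (\<forall>s\<in>{1..<n}. p s > p (Suc s) \<longrightarrow>
           (a s < a (Suc s) \<or> (a s = a (Suc s) \<and> \<not> isplus (a s))))}"

text \<open>Left: Z = {0 < bar1 < 1 < ... < bark < k}, encoded 0..2k:
  index 0 is 0, index 2j-1 is bar j, index 2j is j; plus-type = even index.\<close>
definition Omega_l :: "nat \<Rightarrow> (nat \<Rightarrow> nat) \<Rightarrow> nat \<Rightarrow> nat" where
  "Omega_l n p k = Ncount n (2*k+1) even p"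

text \<open>Right: Z = {bar1 < 1 < ... < bark < k < bar(k+1)}, encoded 0..2k:
  index 2j-2 is bar j, index 2j-1 is j; plus-type = odd index.\<close>
definition Omega_r :: "nat \<Rightarrow> (nat \<Rightarrow> nat) \<Rightarrow> nat \<Rightarrow> nat" where
  "Omega_r n p k = Ncount n (2*k+1) odd p"

definition Omega_l_poly :: "nat \<Rightarrow> (nat \<Rightarrow> nat) \<Rightarrow> rat poly" where
  "Omega_l_poly n p = (THE q. \<forall>k\<ge>1. poly q (of_nat k) = of_nat (Omega_l n p k))"

definition Omega_r_poly :: "nat \<Rightarrow> (nat \<Rightarrow> nat) \<Rightarrow> rat poly" where
  "Omega_r_poly n p = (THE q. \<forall>k\<ge>1. poly q (of_nat k) = of_nat (Omega_r n p k))"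

definition rho_l :: "nat \<Rightarrow> rat \<Rightarrow> (nat \<Rightarrow> nat) \<Rightarrow> rat" where
  "rho_l n x = (\<lambda>p. if p \<in> Sn n then poly (Omega_l_poly n p) ((x - 1) / 2) else 0)"

definition rho_r :: "nat \<Rightarrow> rat \<Rightarrow> (nat \<Rightarrow> nat) \<Rightarrow> rat" where
  "rho_r n x = (\<lambda>p. if p \<in> Sn n then poly (Omega_r_poly n p) ((x - 1) / 2) else 0)"

end

theory Submission
  imports Defs "HOL-Library.Product_Lexorder"
begin

text \<open>
  Standardizing a word \<open>w\<close> over a chain with typed letters means sorting its positions by letter,
  breaking ties left to right among plus-type letters and right to left among minus-type letters;
  \<open>N(\<pi>; Z)\<close> counts the words whose standardization is \<open>\<pi>\<close>. If \<open>Z\<^sub>1\<close> has \<open>m\<close> elements,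
  the lexicographic product \<open>Z\<^sub>2 \<times> Z\<^sub>1\<close>, with each block \<open>{x} \<times> Z\<^sub>1\<close> reversed when \<open>x\<close> is
  minus-type and \<open>(x, y)\<close> plus-type iff \<open>x\<close> and \<open>y\<close> have equal types, is again such a chain,
  and reading the letters of \<open>w\<^sub>2\<close> along the standardization \<open>\<sigma>\<close> of \<open>w\<^sub>1\<close> gives a bijection
  \<open>(w\<^sub>1, w\<^sub>2) \<mapsto> W\<close> with \<open>std W = std w\<^sub>1 \<circ> std w\<^sub>2\<close>. Hence
  \<open>N(\<pi>; Z\<^sub>2 \<times> Z\<^sub>1)\<close> is the sum of \<open>N(\<sigma>; Z\<^sub>1) N(\<tau>; Z\<^sub>2)\<close> over \<open>\<sigma> \<circ> \<tau> = \<pi>\<close>.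

  The chains of the theorem have \<open>2k + 1\<close> elements of alternating types, and the product of
  those with \<open>2k\<^sub>1 + 1\<close> and \<open>2k\<^sub>2 + 1\<close> elements is the one with \<open>(2k\<^sub>1 + 1)(2k\<^sub>2 + 1)\<close>
  elements, of left or right kind according to the parities. At \<open>x = 2k\<^sub>1 + 1\<close>, \<open>y = 2k\<^sub>2 + 1\<close>
  this is the claimed identity. Counting by the last letter shows that \<open>N\<close> is polynomial in \<open>k\<close>,
  so both sides are polynomial in \<open>x\<close> and in \<open>y\<close> and agree everywhere.
\<close>

section \<open>Polynomials in a given function\<close>

definition poly_in :: "('b \<Rightarrow> 'a::comm_ring_1) \<Rightarrow> ('b \<Rightarrow> 'a) \<Rightarrow> bool" where
  "poly_in e f \<longleftrightarrow> (\<exists>q. \<forall>x. f x = poly q (e x))"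

lemma poly_in_const: "poly_in e (\<lambda>x. c)"
  unfolding poly_in_def by (rule exI[of _ "[:c:]"]) simp

lemma poly_in_self: "poly_in e (\<lambda>x. e x)"
  unfolding poly_in_def by (rule exI[of _ "[:0, 1:]"]) simp

lemma poly_in_add: "poly_in e f \<Longrightarrow> poly_in e g \<Longrightarrow> poly_in e (\<lambda>x. f x + g x)"
  unfolding poly_in_def by (metis poly_add)

lemma poly_in_diff: "poly_in e f \<Longrightarrow> poly_in e g \<Longrightarrow> poly_in e (\<lambda>x. f x - g x)"
  unfolding poly_in_def by (metis poly_diff)

lemma poly_in_mult: "poly_in e f \<Longrightarrow> poly_in e g \<Longrightarrow> poly_in e (\<lambda>x. f x * g x)"
  unfolding poly_in_def by (metis poly_mult)

lemma poly_in_divide: "poly_in e f \<Longrightarrow> poly_in e (\<lambda>x. f x / (c :: 'a::field))"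
  by (simp add: divide_inverse poly_in_mult poly_in_const)

lemma poly_in_if: "poly_in e f \<Longrightarrow> poly_in e (\<lambda>x. if b then f x else 0)"
  by (cases b) (simp_all add: poly_in_const)

lemma poly_in_power: "poly_in e f \<Longrightarrow> poly_in e (\<lambda>x. f x ^ d)"
  by (induction d) (auto intro: poly_in_mult poly_in_const)

lemma poly_in_sum: "(\<And>a. a \<in> A \<Longrightarrow> poly_in e (f a)) \<Longrightarrow> poly_in e (\<lambda>x. \<Sum>a\<in>A. f a x)"
  by (induction A rule: infinite_finite_induct) (auto intro: poly_in_add poly_in_const)

lemma poly_in_poly:
  assumes "poly_in e f"
  shows "poly_in e (\<lambda>x. poly q (f x))"
proof -
  obtain r where "\<And>x. f x = poly r (e x)" using assms unfolding poly_in_def by blast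
  then show ?thesis unfolding poly_in_def by (intro exI[of _ "pcompose q r"]) (simp add: poly_pcompose)
qed

lemma poly_eq_0_if_infinite_roots:
  fixes q :: "'a::idom poly"
  assumes "infinite S" "\<And>x. x \<in> S \<Longrightarrow> poly q x = 0"
  shows "q = 0"
proof (rule ccontr)
  assume "q \<noteq> 0"
  then have "finite {x. poly q x = 0}" by (rule poly_roots_finite)
  moreover have "S \<subseteq> {x. poly q x = 0}" using assms(2) by blast
  ultimately show False using assms(1) finite_subset by blast
qed

lemma poly_in_eq_0_if_infinite_roots:
  fixes f :: "'a::idom \<Rightarrow> 'a"
  assumes "poly_in (\<lambda>x. x) f" "infinite S" "\<And>x. x \<in> S \<Longrightarrow> f x = 0"
  shows "f x = 0"
proof -
  obtain q where "\<And>x. f x = poly q x" using assms(1) unfolding poly_in_def by auto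
  with assms(2,3) show ?thesis using poly_eq_0_if_infinite_roots[of S q] by simp
qed

lemma power_Suc_eq_power_sums:
  "(of_nat k :: 'a::comm_ring_1) ^ Suc d =
     (\<Sum>e<d. of_nat (Suc d choose e) * (\<Sum>i<k. of_nat i ^ e)) + of_nat (Suc d) * (\<Sum>i<k. of_nat i ^ d)"
proof -
  have step: "(of_nat (Suc i) :: 'a) ^ Suc d - of_nat i ^ Suc d =
      (\<Sum>e<d. of_nat (Suc d choose e) * of_nat i ^ e) + of_nat (Suc d) * of_nat i ^ d" for i
  proof -
    have "(of_nat (Suc i) :: 'a) ^ Suc d = (of_nat i + 1) ^ Suc d"
      by (simp add: add.commute)
    also have "\<dots> = (\<Sum>e\<le>Suc d. of_nat (Suc d choose e) * of_nat i ^ e)"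
      by (subst binomial_ring) simp
    also have "\<dots> = (\<Sum>e<d. of_nat (Suc d choose e) * of_nat i ^ e) + of_nat (Suc d) * of_nat i ^ d
        + of_nat i ^ Suc d"
      by (simp add: lessThan_Suc_atMost[symmetric])
    finally show ?thesis by simp
  qed
  have "(of_nat k :: 'a) ^ Suc d = (\<Sum>i<k. (of_nat (Suc i) :: 'a) ^ Suc d - of_nat i ^ Suc d)"
    by (subst sum_lessThan_telescope[where f = "\<lambda>i. (of_nat i :: 'a) ^ Suc d"]) simp
  also have "\<dots> = (\<Sum>e<d. of_nat (Suc d choose e) * (\<Sum>i<k. of_nat i ^ e))
      + of_nat (Suc d) * (\<Sum>i<k. of_nat i ^ d)"
    by (simp only: step) (simp add: sum.distrib sum_distrib_left sum.swap[of _ "{..<k}"])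
  finally show ?thesis .
qed

lemma poly_in_power_sum: "poly_in of_nat (\<lambda>k. \<Sum>i<k. (of_nat i :: 'a::field_char_0) ^ d)"
proof (induction d rule: less_induct)
  case (less d)
  have eq: "(\<Sum>i<k. (of_nat i :: 'a) ^ d) =
      (of_nat k ^ Suc d - (\<Sum>e<d. of_nat (Suc d choose e) * (\<Sum>i<k. of_nat i ^ e))) * (1 / of_nat (Suc d))"
    for k by (simp only: power_Suc_eq_power_sums) (simp del: of_nat_Suc)
  show ?case
    unfolding eq
    by (intro poly_in_mult poly_in_diff poly_in_power poly_in_self poly_in_sum poly_in_const less)
      auto
qed

lemma poly_in_partial_sums:
  fixes g :: "nat \<Rightarrow> 'a::field_char_0"
  assumes "poly_in of_nat g"
  shows "poly_in of_nat (\<lambda>k. \<Sum>i<k. g i)"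
proof -
  obtain q where q: "\<And>i. g i = poly q (of_nat i)" using assms unfolding poly_in_def by blast
  have eq: "(\<Sum>i<k. g i) = (\<Sum>e\<le>degree q. coeff q e * (\<Sum>i<k. of_nat i ^ e))" for k
    unfolding q poly_altdef sum_distrib_left by (rule sum.swap)
  show ?thesis
    unfolding eq by (intro poly_in_sum poly_in_mult poly_in_const poly_in_power_sum)
qed

section \<open>Sequences compatible with a permutation\<close>

lemma card_eq_sum_card_fibres:
  assumes "finite A" "finite B" "f ` A \<subseteq> B"
  shows "card A = (\<Sum>b\<in>B. card {a \<in> A. f a = b})"
  using sum.group[OF assms, of "\<lambda>_. 1 :: nat"] by simp

lemma sum_lessThan_double: "(\<Sum>u<2 * (k::nat). f u) = (\<Sum>i<k. f (2 * i) + f (2 * i + 1))"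
  by (induction k) (simp_all add: algebra_simps)

definition admissible_step :: "(nat \<Rightarrow> bool) \<Rightarrow> (nat \<Rightarrow> nat) \<Rightarrow> nat \<Rightarrow> nat \<Rightarrow> nat \<Rightarrow> bool" where
  "admissible_step P p s u v \<longleftrightarrow> u \<le> v \<and>
     (p s < p (Suc s) \<longrightarrow> u < v \<or> u = v \<and> P u) \<and>
     (p (Suc s) < p s \<longrightarrow> u < v \<or> u = v \<and> \<not> P u)"

definition admissible :: "nat \<Rightarrow> (nat \<Rightarrow> bool) \<Rightarrow> (nat \<Rightarrow> nat) \<Rightarrow> (nat \<Rightarrow> nat) \<Rightarrow> bool" where
  "admissible n P p a \<longleftrightarrow> (\<forall>s\<in>{1..<n}. admissible_step P p s (a s) (a (Suc s)))"

lemma Ncount_eq_card_admissible: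
  "Ncount n m P p = card {a \<in> {1..n} \<rightarrow>\<^sub>E {..<m}. admissible n P p a}"
  unfolding Ncount_def admissible_def admissible_step_def
  by (intro arg_cong[where f = card] Collect_cong) auto

lemma admissible_mono:
  assumes "admissible n P p a" "1 \<le> s" "s \<le> t" "t \<le> n"
  shows "a s \<le> a t"
  using assms(3,4)
proof (induction t rule: dec_induct)
  case (step t)
  then have "a t \<le> a (Suc t)"
    using assms(1,2) unfolding admissible_def admissible_step_def by auto
  with step show ?case by simp
qed simp

lemma admissible_cong:
  "(\<And>i. i \<in> {1..n} \<Longrightarrow> a i = b i) \<Longrightarrow> admissible n P p a \<longleftrightarrow> admissible n P p b"
  unfolding admissible_def by (intro ball_cong) auto

lemma admissible_Suc:
  "1 \<le> n \<Longrightarrow>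
    admissible (Suc n) P p a \<longleftrightarrow> admissible n P p a \<and> admissible_step P p n (a n) (a (Suc n))"
  by (auto simp: admissible_def atLeastLessThanSuc)

definition ending_at :: "nat \<Rightarrow> (nat \<Rightarrow> bool) \<Rightarrow> (nat \<Rightarrow> nat) \<Rightarrow> nat \<Rightarrow> (nat \<Rightarrow> nat) set" where
  "ending_at n P p v = {a \<in> {1..n} \<rightarrow>\<^sub>E {..v}. admissible n P p a \<and> a n = v}"

lemma card_admissible_by_last:
  assumes "1 \<le> n"
  shows "card {a \<in> {1..n} \<rightarrow>\<^sub>E {..<m}. admissible n P p a \<and> Q (a n)} =
    (\<Sum>v | v < m \<and> Q v. card (ending_at n P p v))"
proof -
  let ?A = "{a \<in> {1..n} \<rightarrow>\<^sub>E {..<m}. admissible n P p a \<and> Q (a n)}"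
  have fibre: "{a \<in> ?A. a n = v} = ending_at n P p v" if "v < m" "Q v" for v
  proof (intro equalityI subsetI)
    fix a assume a: "a \<in> {a \<in> ?A. a n = v}"
    have "a i \<le> v" if "i \<in> {1..n}" for i
      using a that admissible_mono[of n P p a i n] by auto
    with a show "a \<in> ending_at n P p v" unfolding ending_at_def by (auto simp: PiE_iff)
  next
    fix a assume a: "a \<in> ending_at n P p v"
    have "{1..n} \<rightarrow>\<^sub>E {..v} \<subseteq> {1..n} \<rightarrow>\<^sub>E {..<m}"
      using that by (intro PiE_mono) auto
    with a that show "a \<in> {a \<in> ?A. a n = v}" unfolding ending_at_def by auto
  qed
  have "card ?A = (\<Sum>v | v < m \<and> Q v. card {a \<in> ?A. a n = v})"
  proof (rule card_eq_sum_card_fibres)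
    show "finite ?A" by (rule finite_subset[of _ "{1..n} \<rightarrow>\<^sub>E {..<m}"]) (auto intro: finite_PiE)
    show "(\<lambda>a. a n) ` ?A \<subseteq> {v. v < m \<and> Q v}" using assms by (auto simp: PiE_iff)
  qed simp
  also have "\<dots> = (\<Sum>v | v < m \<and> Q v. card (ending_at n P p v))"
    using fibre by (intro sum.cong) auto
  finally show ?thesis .
qed

lemma card_ending_at_1: "card (ending_at 1 P p v) = 1"
proof -
  have "ending_at 1 P p v = {\<lambda>i\<in>{1}. v}"
    unfolding ending_at_def admissible_def by (auto simp: PiE_iff extensional_def fun_eq_iff)
  then show ?thesis by simp
qed

lemma card_ending_at_Suc:
  assumes "1 \<le> n"
  shows "card (ending_at (Suc n) P p v) =
    card {a \<in> {1..n} \<rightarrow>\<^sub>E {..v}. admissible n P p a \<and> admissible_step P p n (a n) v}"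
proof -
  let ?B = "{a \<in> {1..n} \<rightarrow>\<^sub>E {..v}. admissible n P p a \<and> admissible_step P p n (a n) v}"
  have "bij_betw (\<lambda>a. a(Suc n := v)) ?B (ending_at (Suc n) P p v)"
  proof (rule bij_betw_byWitness[where f' = "\<lambda>b. restrict b {1..n}"])
    show "\<forall>a\<in>?B. restrict (a(Suc n := v)) {1..n} = a"
      by (auto simp: PiE_iff extensional_def fun_eq_iff)
    show "\<forall>b\<in>ending_at (Suc n) P p v. (restrict b {1..n})(Suc n := v) = b"
      unfolding ending_at_def by (auto simp: PiE_iff extensional_def fun_eq_iff)
    show "(\<lambda>a. a(Suc n := v)) ` ?B \<subseteq> ending_at (Suc n) P p v"
    proof
      fix b assume "b \<in> (\<lambda>a. a(Suc n := v)) ` ?B"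
      then obtain a where a: "a \<in> ?B" and b: "b = a(Suc n := v)" by blast
      have "admissible n P p b"
        using a by (subst admissible_cong[of n b a]) (auto simp: b)
      then have "admissible (Suc n) P p b"
        using a assms by (simp add: admissible_Suc b)
      moreover have "b \<in> {1..Suc n} \<rightarrow>\<^sub>E {..v}"
        using a unfolding b by (simp add: atLeastAtMostSuc_conv PiE_fun_upd)
      ultimately show "b \<in> ending_at (Suc n) P p v"
        unfolding ending_at_def by (simp add: b)
    qed
    show "(\<lambda>b. restrict b {1..n}) ` ending_at (Suc n) P p v \<subseteq> ?B"
    proof
      fix a assume "a \<in> (\<lambda>b. restrict b {1..n}) ` ending_at (Suc n) P p v"
      then obtain b where b: "b \<in> ending_at (Suc n) P p v" and a: "a = restrict b {1..n}" by blast
      have "admissible n P p b" "admissible_step P p n (b n) v"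
        using b assms unfolding ending_at_def by (auto simp: admissible_Suc)
      then have "admissible n P p a" "admissible_step P p n (a n) v"
        using assms by (auto simp: a intro: admissible_cong[THEN iffD1])
      with b show "a \<in> ?B"
        unfolding ending_at_def by (auto simp: a PiE_iff)
    qed
  qed
  then show ?thesis by (simp add: bij_betw_same_card)
qed

lemma card_ending_at_Suc_eq:
  assumes "1 \<le> n"
  shows "card (ending_at (Suc n) P p v) = (\<Sum>u<v. card (ending_at n P p u)) +
    (if admissible_step P p n v v then card (ending_at n P p v) else 0)"
proof -
  have "{u. u < Suc v \<and> admissible_step P p n u v} =
      (if admissible_step P p n v v then insert v {..<v} else {..<v})"
    by (auto simp: admissible_step_def)
  moreover have "card (ending_at (Suc n) P p v) =
      (\<Sum>u | u < Suc v \<and> admissible_step P p n u v. card (ending_at n P p u))"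
    using card_ending_at_Suc[OF assms]
      card_admissible_by_last[OF assms, of "Suc v" P p "\<lambda>u. admissible_step P p n u v"]
    by (simp add: lessThan_Suc_atMost)
  ultimately show ?thesis by simp
qed

lemma period_2_mult_add:
  assumes "\<And>z. P (Suc (Suc z)) = P z"
  shows "P (2 * k + r) = P r"
proof (induction k)
  case (Suc k)
  have "P (2 * Suc k + r) = P (Suc (Suc (2 * k + r)))" by simp
  with Suc assms show ?case by simp
qed simp

text \<open>For 2-periodic \<open>P\<close> the condition \<open>admissible_step P p n v v\<close> depends only on the parity
  of \<open>v\<close>, so the recurrence for the cardinalities of \<open>ending_at\<close> stays polynomial on even and on
  odd arguments.\<close>

lemma poly_in_card_ending_at:
  fixes r :: nat
  assumes "1 \<le> n" "r < 2" and periodic: "\<And>z. P (Suc (Suc z)) = P z"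
  shows "poly_in of_nat (\<lambda>k. (of_nat (card (ending_at n P p (2 * k + r))) :: 'a::field_char_0))"
  using assms(1,2)
proof (induction n arbitrary: r rule: nat_induct_at_least)
  case base
  then show ?case by (simp add: card_ending_at_1[unfolded One_nat_def] poly_in_const)
next
  case (Suc n)
  define H where "H u = (of_nat (card (ending_at n P p u)) :: 'a)" for u
  have IH0: "poly_in of_nat (\<lambda>k. H (2 * k))" and IH1: "poly_in of_nat (\<lambda>k. H (2 * k + 1))"
    and IHr: "poly_in of_nat (\<lambda>k. H (2 * k + r))"
    using Suc.IH[of 0] Suc.IH[of 1] Suc.IH[OF Suc.prems] by (simp_all add: H_def)
  have step: "admissible_step P p n (2 * k + r) (2 * k + r) \<longleftrightarrow> admissible_step P p n r r" for k
    by (simp add: admissible_step_def period_2_mult_add[of P, OF periodic])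
  have "(\<Sum>u<2 * k + r. H u) = (\<Sum>i<k. H (2 * i) + H (2 * i + 1)) + (if 0 < r then H (2 * k) else 0)"
    for k using Suc.prems by (cases r) (simp_all add: sum_lessThan_double)
  then have "of_nat (card (ending_at (Suc n) P p (2 * k + r))) =
      (\<Sum>i<k. H (2 * i) + H (2 * i + 1)) + (if 0 < r then H (2 * k) else 0) +
      (if admissible_step P p n r r then H (2 * k + r) else 0)" for k
    by (simp add: card_ending_at_Suc_eq[OF Suc.hyps] step H_def of_nat_sum)
  moreover have "poly_in of_nat (\<lambda>k. (\<Sum>i<k. H (2 * i) + H (2 * i + 1)) +
      (if 0 < r then H (2 * k) else 0) + (if admissible_step P p n r r then H (2 * k + r) else 0))"
    by (intro poly_in_add poly_in_partial_sums poly_in_if IH0 IH1 IHr)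
  ultimately show ?case by simp
qed

lemma Ncount_eq_sum_ending_at:
  assumes "1 \<le> n"
  shows "Ncount n m P p = (\<Sum>v<m. card (ending_at n P p v))"
  using card_admissible_by_last[OF assms, of m P p "\<lambda>_. True"]
  by (simp add: Ncount_eq_card_admissible lessThan_def)

lemma poly_in_Ncount:
  assumes "1 \<le> n" "\<And>z. P (Suc (Suc z)) = P z"
  shows "poly_in of_nat (\<lambda>k. (of_nat (Ncount n (2 * k + 1) P p) :: 'a::field_char_0))"
proof -
  define H where "H u = (of_nat (card (ending_at n P p u)) :: 'a)" for u
  have "poly_in of_nat (\<lambda>k. H (2 * k + r))" if "r < 2" for r
    unfolding H_def using assms(1) that assms(2) by (rule poly_in_card_ending_at)
  from this[of 0] this[of 1]
  have "poly_in of_nat (\<lambda>k. (\<Sum>i<k. H (2 * i) + H (2 * i + 1)) + H (2 * k))"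
    by (intro poly_in_add poly_in_partial_sums) simp_all
  moreover have "of_nat (Ncount n (2 * k + 1) P p) = (\<Sum>i<k. H (2 * i) + H (2 * i + 1)) + H (2 * k)"
    for k
    by (simp add: Ncount_eq_sum_ending_at[OF assms(1)] H_def sum_lessThan_double of_nat_sum)
  ultimately show ?thesis by simp
qed

lemma poly_eqI_nat:
  fixes q1 q2 :: "'a::{idom, ring_char_0} poly"
  assumes "\<And>k. 1 \<le> k \<Longrightarrow> poly q1 (of_nat k) = poly q2 (of_nat k)"
  shows "q1 = q2"
proof -
  have "inj_on (of_nat :: nat \<Rightarrow> 'a) {1..}" by (simp add: inj_on_def)
  then have "infinite (of_nat ` {1..} :: 'a set)" by (simp add: finite_image_iff infinite_Ici)
  then have "q1 - q2 = 0"
    by (rule poly_eq_0_if_infinite_roots) (use assms in auto)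
  then show ?thesis by simp
qed

definition Omega_poly :: "nat \<Rightarrow> (nat \<Rightarrow> bool) \<Rightarrow> (nat \<Rightarrow> nat) \<Rightarrow> rat poly" where
  "Omega_poly n P p = (THE q. \<forall>k\<ge>1. poly q (of_nat k) = of_nat (Ncount n (2 * k + 1) P p))"

lemma poly_Omega_poly:
  assumes "1 \<le> n" "\<And>z. P (Suc (Suc z)) = P z" "1 \<le> k"
  shows "poly (Omega_poly n P p) (of_nat k) = of_nat (Ncount n (2 * k + 1) P p)"
proof -
  obtain q :: "rat poly" where q: "\<And>k. of_nat (Ncount n (2 * k + 1) P p) = poly q (of_nat k)"
    using poly_in_Ncount[of n P, OF assms(1,2)] unfolding poly_in_def by blast
  have "Omega_poly n P p = q"
    unfolding Omega_poly_def by (rule the_equality) (use q poly_eqI_nat in auto)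
  with q assms(3) show ?thesis by simp
qed

definition rho :: "nat \<Rightarrow> (nat \<Rightarrow> bool) \<Rightarrow> rat \<Rightarrow> (nat \<Rightarrow> nat) \<Rightarrow> rat" where
  "rho n P x = (\<lambda>p. if p \<in> Sn n then poly (Omega_poly n P p) ((x - 1) / 2) else 0)"

lemma rho_l_eq: "rho_l n = rho n even"
  unfolding rho_l_def rho_def Omega_l_poly_def Omega_l_def Omega_poly_def ..

lemma rho_r_eq: "rho_r n = rho n odd"
  unfolding rho_r_def rho_def Omega_r_poly_def Omega_r_def Omega_poly_def ..

section \<open>Standardization\<close>

definition sorts :: "nat \<Rightarrow> (nat \<Rightarrow> 'a::linorder) \<Rightarrow> (nat \<Rightarrow> nat) \<Rightarrow> bool" where
  "sorts n f p \<longleftrightarrow> p permutes {1..n} \<and> (\<forall>s\<in>{1..<n}. f (p s) < f (p (Suc s)))"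

lemma sorts_less:
  assumes "sorts n f p" "1 \<le> s" "s < t" "t \<le> n"
  shows "f (p s) < f (p t)"
proof -
  have "Suc s \<le> t" "t \<le> n" using assms(3,4) by simp_all
  then show ?thesis
  proof (induction t rule: dec_induct)
    case base
    then show ?case using assms(1,2) unfolding sorts_def by simp
  next
    case (step t)
    then have "f (p t) < f (p (Suc t))" using assms(1,2) unfolding sorts_def by simp
    with step show ?case by simp
  qed
qed

lemma sorts_less_iff:
  assumes "sorts n f p" "s \<in> {1..n}" "t \<in> {1..n}"
  shows "f (p s) < f (p t) \<longleftrightarrow> s < t"
proof (cases s t rule: linorder_cases)
  case less
  then show ?thesis using sorts_less[OF assms(1), of s t] assms(2,3) by simp
next
  case greater
  then have "f (p t) < f (p s)" using sorts_less[OF assms(1), of t s] assms(2,3) by simp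
  with greater show ?thesis by (simp add: less_not_sym)
qed simp

definition key_rank :: "nat \<Rightarrow> (nat \<Rightarrow> 'a::linorder) \<Rightarrow> nat \<Rightarrow> nat" where
  "key_rank n f i = card {j \<in> {1..n}. f j < f i}"

lemma key_rank_sorts:
  assumes "sorts n f p" "t \<in> {1..n}"
  shows "key_rank n f (p t) = t - 1"
proof -
  have perm: "p permutes {1..n}" using assms(1) by (simp add: sorts_def)
  have "{j \<in> {1..n}. f j < f (p t)} = p ` {1..<t}"
  proof (intro equalityI subsetI)
    fix j assume j: "j \<in> {j \<in> {1..n}. f j < f (p t)}"
    then have "j \<in> {1..n}" by simp
    then have "j \<in> p ` {1..n}" unfolding permutes_image[OF perm] .
    then obtain s where s: "s \<in> {1..n}" "j = p s" by blast
    with j have "s < t" using sorts_less_iff[OF assms(1) s(1) assms(2)] by simp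
    with s show "j \<in> p ` {1..<t}" by auto
  next
    fix j assume "j \<in> p ` {1..<t}"
    then obtain s where "s \<in> {1..<t}" "j = p s" by blast
    then show "j \<in> {j \<in> {1..n}. f j < f (p t)}"
      using assms sorts_less_iff[OF assms(1), of s t] permutes_in_image[OF perm, of s] by auto
  qed
  moreover have "inj_on p {1..<t}"
    using permutes_inj[OF perm] by (rule inj_on_subset) simp
  ultimately show ?thesis unfolding key_rank_def by (simp add: card_image)
qed

lemma sorts_unique:
  assumes "sorts n f p" "sorts n f q"
  shows "p = q"
proof
  fix t
  have perm: "p permutes {1..n}" "q permutes {1..n}" using assms by (simp_all add: sorts_def)
  show "p t = q t"
  proof (cases "t \<in> {1..n}")
    case True
    then have "q t \<in> {1..n}" unfolding permutes_in_image[OF perm(2)] .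
    then have "q t \<in> p ` {1..n}" unfolding permutes_image[OF perm(1)] .
    then obtain s where s: "s \<in> {1..n}" "q t = p s" by blast
    have "s - 1 = t - 1"
      using key_rank_sorts[OF assms(1) s(1)] key_rank_sorts[OF assms(2) True] s(2) by simp
    with s(1) True have "s = t" by auto
    with s show ?thesis by simp
  next
    case False
    then show ?thesis using permutes_not_in[OF perm(1)] permutes_not_in[OF perm(2)] by simp
  qed
qed

lemma key_rank_less_key_rank:
  assumes "f i < f j" "i \<in> {1..n}"
  shows "key_rank n f i < key_rank n f j"
proof -
  have "{k \<in> {1..n}. f k < f i} \<subseteq> {k \<in> {1..n}. f k < f j}"
    using less_trans[OF _ assms(1)] by auto
  moreover have "i \<in> {k \<in> {1..n}. f k < f j} - {k \<in> {1..n}. f k < f i}"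
    using assms by simp
  ultimately have "{k \<in> {1..n}. f k < f i} \<subset> {k \<in> {1..n}. f k < f j}" by blast
  then show ?thesis unfolding key_rank_def by (simp add: psubset_card_mono)
qed

lemma key_rank_less:
  assumes "i \<in> {1..n}"
  shows "key_rank n f i < n"
proof -
  have "i \<in> {1..n} - {j \<in> {1..n}. f j < f i}" using assms by simp
  then have "{j \<in> {1..n}. f j < f i} \<subset> {1..n}" by blast
  then show ?thesis unfolding key_rank_def using psubset_card_mono[of "{1..n}"] by simp
qed

lemma sorts_exists:
  assumes "inj_on f {1..n}"
  shows "\<exists>p. sorts n f p"
proof -
  define r where "r i = (if i \<in> {1..n} then Suc (key_rank n f i) else i)" for i
  have r_less_iff: "r i < r j \<longleftrightarrow> f i < f j" if "i \<in> {1..n}" "j \<in> {1..n}" for i j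
  proof (cases "f i" "f j" rule: linorder_cases)
    case less
    then show ?thesis using key_rank_less_key_rank[of f i j n] that by (simp add: r_def)
  next
    case equal
    then have "i = j" using assms that by (auto dest: inj_onD)
    then show ?thesis by simp
  next
    case greater
    then show ?thesis using key_rank_less_key_rank[of f j i n] that by (simp add: r_def)
  qed
  have "inj_on r {1..n}"
  proof (rule inj_onI)
    fix i j assume ij: "i \<in> {1..n}" "j \<in> {1..n}" "r i = r j"
    then have "f i = f j" using r_less_iff[of i j] r_less_iff[of j i] by auto
    with ij show "i = j" using inj_onD[OF assms] by blast
  qed
  moreover have "r ` {1..n} \<subseteq> {1..n}"
  proof
    fix x assume "x \<in> r ` {1..n}"
    then obtain i where "i \<in> {1..n}" "x = r i" by blast
    with key_rank_less[of i n f] show "x \<in> {1..n}" by (simp add: r_def)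
  qed
  ultimately have "bij_betw r {1..n} {1..n}"
    by (simp add: bij_betw_def endo_inj_surj)
  then have r: "r permutes {1..n}"
    by (rule bij_imp_permutes) (auto simp: r_def)
  have "sorts n f (inv r)"
    unfolding sorts_def
  proof (intro conjI ballI)
    show "inv r permutes {1..n}" using r by (rule permutes_inv)
    fix s assume "s \<in> {1..<n}"
    moreover have "r (inv r s) = s" "r (inv r (Suc s)) = Suc s"
      using permutes_inverses(1)[OF r] by simp_all
    moreover have "inv r s \<in> {1..n}" "inv r (Suc s) \<in> {1..n}"
      using \<open>s \<in> {1..<n}\<close> permutes_in_image[OF permutes_inv[OF r]] by auto
    ultimately show "f (inv r s) < f (inv r (Suc s))"
      using r_less_iff[of "inv r s" "inv r (Suc s)"] by simp
  qed
  then show ?thesis by blast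
qed

definition sort_perm :: "nat \<Rightarrow> (nat \<Rightarrow> 'a::linorder) \<Rightarrow> nat \<Rightarrow> nat" where
  "sort_perm n f = (THE p. sorts n f p)"

lemma sort_perm_eqI:
  assumes "sorts n f p"
  shows "sort_perm n f = p"
  unfolding sort_perm_def by (rule the_equality[of "sorts n f", OF assms]) (rule sorts_unique[OF _ assms])

lemma sorts_sort_perm:
  assumes "inj_on f {1..n}"
  shows "sorts n f (sort_perm n f)"
proof -
  obtain p where "sorts n f p" using sorts_exists[OF assms] by blast
  with sort_perm_eqI[OF this] show ?thesis by simp
qed

text \<open>Equal letters are ordered left to right when plus-type and right to left when minus-type.\<close>

definition std_key :: "(nat \<Rightarrow> bool) \<Rightarrow> (nat \<Rightarrow> nat) \<Rightarrow> nat \<Rightarrow> nat \<times> int" where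
  "std_key P w i = (w i, if P (w i) then int i else - int i)"

definition std :: "nat \<Rightarrow> (nat \<Rightarrow> bool) \<Rightarrow> (nat \<Rightarrow> nat) \<Rightarrow> nat \<Rightarrow> nat" where
  "std n P w = sort_perm n (std_key P w)"

lemma inj_std_key: "inj (std_key P w)"
  by (rule injI) (auto simp: std_key_def split: if_splits)

lemma sorts_std: "sorts n (std_key P w) (std n P w)"
  unfolding std_def by (rule sorts_sort_perm) (rule inj_on_subset[OF inj_std_key], simp)

lemma std_permutes: "std n P w permutes {1..n}"
  using sorts_std[of n P w] by (simp add: sorts_def)

lemma std_eq_iff: "std n P w = p \<longleftrightarrow> sorts n (std_key P w) p"
  using sorts_std[of n P w] unfolding std_def by (auto intro: sort_perm_eqI)

lemma admissible_comp_iff_sorts: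
  assumes "p permutes {1..n}"
  shows "admissible n P p (w \<circ> p) \<longleftrightarrow> sorts n (std_key P w) p"
proof -
  have "admissible_step P p s (w (p s)) (w (p (Suc s))) \<longleftrightarrow>
      std_key P w (p s) < std_key P w (p (Suc s))" for s
  proof -
    have "p s \<noteq> p (Suc s)" using injD[OF permutes_inj[OF assms], of s "Suc s"] by auto
    then show ?thesis
      by (cases "p s < p (Suc s)"; cases "w (p s) = w (p (Suc s))")
        (auto simp: admissible_step_def std_key_def)
  qed
  with assms show ?thesis by (simp add: admissible_def sorts_def)
qed

lemma bij_betw_restrict_comp_permutes:
  assumes "p permutes S"
  shows "bij_betw (\<lambda>w. restrict (w \<circ> p) S) (S \<rightarrow>\<^sub>E T) (S \<rightarrow>\<^sub>E T)"
proof (rule bij_betw_byWitness[where f' = "\<lambda>w. restrict (w \<circ> inv p) S"])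
  have p: "p x \<in> S \<longleftrightarrow> x \<in> S" "inv p x \<in> S \<longleftrightarrow> x \<in> S" "p (inv p x) = x" "inv p (p x) = x" for x
    using permutes_in_image[OF assms] permutes_in_image[OF permutes_inv[OF assms]]
      permutes_inverses[OF assms] by simp_all
  show "\<forall>w\<in>S \<rightarrow>\<^sub>E T. restrict (restrict (w \<circ> p) S \<circ> inv p) S = w"
    and "\<forall>w\<in>S \<rightarrow>\<^sub>E T. restrict (restrict (w \<circ> inv p) S \<circ> p) S = w"
    by (auto intro!: extensionalityI[where A = S] simp: p PiE_iff)
  show "(\<lambda>w. restrict (w \<circ> p) S) ` (S \<rightarrow>\<^sub>E T) \<subseteq> S \<rightarrow>\<^sub>E T"
    and "(\<lambda>w. restrict (w \<circ> inv p) S) ` (S \<rightarrow>\<^sub>E T) \<subseteq> S \<rightarrow>\<^sub>E T"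
    by (auto simp: p)
qed

lemma card_Collect_bij_betw:
  assumes "bij_betw f A B"
  shows "card {x \<in> A. Q (f x)} = card {y \<in> B. Q y}"
proof -
  have "inj_on f {x \<in> A. Q (f x)}"
    using bij_betw_imp_inj_on[OF assms] by (rule inj_on_subset) blast
  moreover have "f ` {x \<in> A. Q (f x)} = {y \<in> B. Q y}"
    unfolding bij_betw_imp_surj_on[OF assms, symmetric] by auto
  ultimately have "bij_betw f {x \<in> A. Q (f x)} {y \<in> B. Q y}"
    unfolding bij_betw_def by blast
  then show ?thesis by (rule bij_betw_same_card)
qed

lemma Ncount_eq_card_std:
  assumes "p \<in> Sn n"
  shows "Ncount n m P p = card {w \<in> {1..n} \<rightarrow>\<^sub>E {..<m}. std n P w = p}"
proof -
  have perm: "p permutes {1..n}" using assms by (simp add: Sn_def)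
  have "Ncount n m P p =
      card {w \<in> {1..n} \<rightarrow>\<^sub>E {..<m}. admissible n P p (restrict (w \<circ> p) {1..n})}"
    unfolding Ncount_eq_card_admissible
    using card_Collect_bij_betw[OF bij_betw_restrict_comp_permutes[OF perm], where Q = "admissible n P p"]
    by simp
  also have "\<dots> = card {w \<in> {1..n} \<rightarrow>\<^sub>E {..<m}. std n P w = p}"
  proof -
    have "admissible n P p (restrict (w \<circ> p) {1..n}) \<longleftrightarrow> std n P w = p" for w
      using admissible_cong[of n "restrict (w \<circ> p) {1..n}" "w \<circ> p" P p]
        admissible_comp_iff_sorts[OF perm, of P w] std_eq_iff[of n P w p] by simp
    then show ?thesis by simp
  qed
  finally show ?thesis .
qed

section \<open>Twisted products of chains\<close>

text \<open>\<open>pair_code m Q x y\<close> encodes the pair \<open>(x, y)\<close> of the lexicographic product of an outer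
  chain typed by \<open>Q\<close> and the chain \<open>{..<m}\<close> typed by \<open>P\<close>, in which the block of \<open>x\<close> is
  reversed when \<open>x\<close> is minus-type; by \<open>product_type m P Q\<close> the pair is plus-type iff \<open>x\<close> and
  \<open>y\<close> have the same type.\<close>

definition twist :: "nat \<Rightarrow> bool \<Rightarrow> nat \<Rightarrow> nat" where
  "twist m b y = (if b then y else m - 1 - y)"

definition pair_code :: "nat \<Rightarrow> (nat \<Rightarrow> bool) \<Rightarrow> nat \<Rightarrow> nat \<Rightarrow> nat" where
  "pair_code m Q x y = x * m + twist m (Q x) y"

definition product_type :: "nat \<Rightarrow> (nat \<Rightarrow> bool) \<Rightarrow> (nat \<Rightarrow> bool) \<Rightarrow> nat \<Rightarrow> bool" where
  "product_type m P Q z \<longleftrightarrow> Q (z div m) = P (twist m (Q (z div m)) (z mod m))"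

lemma twist_less: "y < m \<Longrightarrow> twist m b y < m"
  by (auto simp: twist_def)

lemma twist_twist: "y < m \<Longrightarrow> twist m b (twist m b y) = y"
  by (auto simp: twist_def)

lemma twist_less_iff:
  "y < m \<Longrightarrow> y' < m \<Longrightarrow> twist m b y < twist m b y' \<longleftrightarrow> (if b then y < y' else y' < y)"
  by (auto simp: twist_def)

lemma mult_add_less_mult_add:
  fixes m :: nat
  assumes "x < x'" "a < m"
  shows "x * m + a < x' * m + b"
proof -
  have "Suc x * m \<le> x' * m" using assms(1) by (intro mult_le_mono1) simp
  with assms(2) show ?thesis by simp
qed

lemma mult_add_less_iff:
  fixes m :: nat
  assumes "a < m" "b < m"
  shows "x * m + a < x' * m + b \<longleftrightarrow> x < x' \<or> x = x' \<and> a < b"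
proof (cases x x' rule: linorder_cases)
  case less
  then have "x * m + a < x' * m + b" using assms(1) by (rule mult_add_less_mult_add)
  with less show ?thesis by simp
next
  case greater
  then have "x' * m + b < x * m + a" using assms(2) by (rule mult_add_less_mult_add)
  with greater show ?thesis by simp
qed simp

lemma pair_code_less_iff:
  assumes "y < m" "y' < m"
  shows "pair_code m Q x y < pair_code m Q x' y' \<longleftrightarrow>
    x < x' \<or> x = x' \<and> (if Q x then y < y' else y' < y)"
proof -
  have "pair_code m Q x y < pair_code m Q x' y' \<longleftrightarrow>
      x < x' \<or> x = x' \<and> twist m (Q x) y < twist m (Q x') y'"
    unfolding pair_code_def using assms by (simp add: mult_add_less_iff twist_less)
  with assms show ?thesis by (cases "x = x'") (simp_all add: twist_less_iff)
qed

lemma pair_code_eq_iff: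
  assumes "y < m" "y' < m"
  shows "pair_code m Q x y = pair_code m Q x' y' \<longleftrightarrow> x = x' \<and> y = y'"
  using pair_code_less_iff[OF assms, of Q x x'] pair_code_less_iff[OF assms(2,1), of Q x' x]
  by (cases "Q x") (auto simp: linorder_neq_iff)

lemma pair_code_less_mult:
  assumes "y < m" "x < m2"
  shows "pair_code m Q x y < m2 * m"
  using mult_add_less_mult_add[OF assms(2) twist_less[OF assms(1)], where b = 0]
  by (simp add: pair_code_def)

lemma product_type_pair_code:
  assumes "y < m"
  shows "product_type m P Q (pair_code m Q x y) \<longleftrightarrow> Q x = P y"
  using assms twist_less[OF assms]
  by (simp add: product_type_def pair_code_def twist_twist)

lemma std_key_pair_code_less_iff:
  assumes "Y i < m" "Y j < m"
    and "W i = pair_code m Q (X i) (Y i)" "W j = pair_code m Q (X j) (Y j)"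
  shows "std_key (product_type m P Q) W i < std_key (product_type m P Q) W j \<longleftrightarrow>
    X i < X j \<or> X i = X j \<and>
      (if Q (X i) then std_key P Y i < std_key P Y j else std_key P Y j < std_key P Y i)"
proof -
  have lt: "W i < W j \<longleftrightarrow> X i < X j \<or> X i = X j \<and> (if Q (X i) then Y i < Y j else Y j < Y i)"
    and eq: "W i = W j \<longleftrightarrow> X i = X j \<and> Y i = Y j"
    and ty: "product_type m P Q (W i) \<longleftrightarrow> Q (X i) = P (Y i)"
      "product_type m P Q (W j) \<longleftrightarrow> Q (X j) = P (Y j)"
    using assms by (simp_all add: pair_code_less_iff pair_code_eq_iff product_type_pair_code)
  show ?thesis
  proof (cases "X i = X j \<and> Y i = Y j")
    case True
    with eq have "W i = W j" by simp
    with True show ?thesis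
      unfolding std_key_def less_prod_def' fst_conv snd_conv ty
      by (cases "Q (X j)"; cases "P (Y j)") simp_all
  next
    case False
    then show ?thesis
      unfolding std_key_def less_prod_def' fst_conv snd_conv eq lt by auto
  qed
qed

definition product_word ::
    "nat \<Rightarrow> nat \<Rightarrow> (nat \<Rightarrow> bool) \<Rightarrow> (nat \<Rightarrow> bool) \<Rightarrow> (nat \<Rightarrow> nat) \<Rightarrow> (nat \<Rightarrow> nat) \<Rightarrow> nat \<Rightarrow> nat" where
  "product_word n m P Q w1 w2 = (\<lambda>i\<in>{1..n}. pair_code m Q (w2 (inv (std n P w1) i)) (w1 i))"

lemma std_product_word:
  assumes "w1 \<in> {1..n} \<rightarrow>\<^sub>E {..<m}"
  shows "std n (product_type m P Q) (product_word n m P Q w1 w2) = std n P w1 \<circ> std n Q w2"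
proof -
  let ?\<sigma> = "std n P w1" and ?\<tau> = "std n Q w2" and ?W = "product_word n m P Q w1 w2"
  have \<sigma>: "?\<sigma> permutes {1..n}" and \<tau>: "?\<tau> permutes {1..n}" by (rule std_permutes)+
  have key: "std_key (product_type m P Q) ?W (?\<sigma> t) < std_key (product_type m P Q) ?W (?\<sigma> t')
      \<longleftrightarrow> std_key Q w2 t < std_key Q w2 t'" if t: "t \<in> {1..n}" "t' \<in> {1..n}" for t t'
  proof -
    have \<sigma>t: "?\<sigma> t \<in> {1..n}" "?\<sigma> t' \<in> {1..n}"
      using t unfolding permutes_in_image[OF \<sigma>] .
    have W: "?W (?\<sigma> u) = pair_code m Q (w2 (inv ?\<sigma> (?\<sigma> u))) (w1 (?\<sigma> u))"
      if "?\<sigma> u \<in> {1..n}" for u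
      using that by (simp add: product_word_def)
    have "w1 (?\<sigma> t) < m" "w1 (?\<sigma> t') < m" using assms \<sigma>t by auto
    from std_key_pair_code_less_iff[where X = "\<lambda>i. w2 (inv ?\<sigma> i)" and Y = w1 and W = ?W
        and i = "?\<sigma> t" and j = "?\<sigma> t'" and P = P, OF this W[OF \<sigma>t(1)] W[OF \<sigma>t(2)]]
    have "std_key (product_type m P Q) ?W (?\<sigma> t) < std_key (product_type m P Q) ?W (?\<sigma> t')
        \<longleftrightarrow> w2 t < w2 t' \<or> w2 t = w2 t' \<and> (if Q (w2 t) then t < t' else t' < t)"
      using sorts_less_iff[OF sorts_std[of n P w1] t] sorts_less_iff[OF sorts_std[of n P w1] t(2,1)]
      by (simp add: permutes_inverses(2)[OF \<sigma>])
    also have "\<dots> \<longleftrightarrow> std_key Q w2 t < std_key Q w2 t'"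
      by (auto simp: std_key_def less_prod_def')
    finally show ?thesis .
  qed
  have "sorts n (std_key (product_type m P Q) ?W) (?\<sigma> \<circ> ?\<tau>)"
    unfolding sorts_def
  proof (intro conjI ballI)
    show "?\<sigma> \<circ> ?\<tau> permutes {1..n}" using \<tau> \<sigma> by (rule permutes_compose)
    fix s assume s: "s \<in> {1..<n}"
    then have "s \<in> {1..n}" "Suc s \<in> {1..n}" by auto
    then have "?\<tau> s \<in> {1..n}" "?\<tau> (Suc s) \<in> {1..n}" unfolding permutes_in_image[OF \<tau>] .
    moreover have "std_key Q w2 (?\<tau> s) < std_key Q w2 (?\<tau> (Suc s))"
      using sorts_std[of n Q w2] s unfolding sorts_def by blast
    ultimately show "std_key (product_type m P Q) ?W ((?\<sigma> \<circ> ?\<tau>) s) <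
        std_key (product_type m P Q) ?W ((?\<sigma> \<circ> ?\<tau>) (Suc s))"
      using key by simp
  qed
  then show ?thesis by (simp add: std_eq_iff)
qed

lemma finite_Sn: "finite (Sn n)"
  unfolding Sn_def by (rule finite_permutations) simp

lemma std_in_Sn: "std n P w \<in> Sn n"
  using std_permutes by (simp add: Sn_def)

lemma product_word_in_PiE:
  assumes w: "w1 \<in> {1..n} \<rightarrow>\<^sub>E {..<m}" "w2 \<in> {1..n} \<rightarrow>\<^sub>E {..<m2}"
  shows "product_word n m P Q w1 w2 \<in> {1..n} \<rightarrow>\<^sub>E {..<m2 * m}"
proof -
  have "pair_code m Q (w2 (inv (std n P w1) i)) (w1 i) < m2 * m" if i: "i \<in> {1..n}" for i
  proof (rule pair_code_less_mult)
    show "w1 i < m" using PiE_mem[OF w(1) i] by simp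
    have "inv (std n P w1) i \<in> {1..n}"
      using i unfolding permutes_in_image[OF permutes_inv[OF std_permutes]] .
    then show "w2 (inv (std n P w1) i) < m2" using PiE_mem[OF w(2)] by simp
  qed
  then show ?thesis unfolding product_word_def by simp
qed

lemma product_word_inj:
  assumes A: "u \<in> {1..n} \<rightarrow>\<^sub>E {..<m}" "u' \<in> {1..n} \<rightarrow>\<^sub>E {..<m}"
    "v \<in> {1..n} \<rightarrow>\<^sub>E {..<m2}" "v' \<in> {1..n} \<rightarrow>\<^sub>E {..<m2}"
    and eq: "product_word n m P Q u v = product_word n m P Q u' v'"
  shows "u = u' \<and> v = v'"
proof -
  have codes: "v (inv (std n P u) i) = v' (inv (std n P u') i) \<and> u i = u' i"
    if i: "i \<in> {1..n}" for i
  proof -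
    have "u i < m" "u' i < m" using PiE_mem[OF A(1) i] PiE_mem[OF A(2) i] by simp_all
    moreover have "pair_code m Q (v (inv (std n P u) i)) (u i) =
        pair_code m Q (v' (inv (std n P u') i)) (u' i)"
      using fun_cong[OF eq, of i] i by (simp add: product_word_def)
    ultimately show ?thesis by (simp add: pair_code_eq_iff)
  qed
  have "u = u'"
  proof (rule extensionalityI[where A = "{1..n}"])
    show "u \<in> extensional {1..n}" "u' \<in> extensional {1..n}" using A by (simp_all add: PiE_iff)
  qed (use codes in blast)
  moreover have "v = v'"
  proof (rule extensionalityI[where A = "{1..n}"])
    show "v \<in> extensional {1..n}" "v' \<in> extensional {1..n}" using A by (simp_all add: PiE_iff)
    fix t assume "t \<in> {1..n}"
    then have "std n P u t \<in> {1..n}" unfolding permutes_in_image[OF std_permutes] .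
    with codes[of "std n P u t"] \<open>u = u'\<close> show "v t = v' t"
      by (simp add: permutes_inverses(2)[OF std_permutes])
  qed
  ultimately show ?thesis ..
qed

lemma bij_betw_product_word:
  assumes "0 < m"
  shows "bij_betw (\<lambda>(w1, w2). product_word n m P Q w1 w2)
    (({1..n} \<rightarrow>\<^sub>E {..<m}) \<times> ({1..n} \<rightarrow>\<^sub>E {..<m2})) ({1..n} \<rightarrow>\<^sub>E {..<m2 * m})"
proof -
  let ?f = "\<lambda>(w1, w2). product_word n m P Q w1 w2"
  let ?A = "({1..n} \<rightarrow>\<^sub>E {..<m}) \<times> ({1..n} \<rightarrow>\<^sub>E {..<m2})" and ?B = "{1..n} \<rightarrow>\<^sub>E {..<m2 * m}"
  have "inj_on ?f ?A"
  proof (rule inj_onI)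
    fix ww ww' assume "ww \<in> ?A" "ww' \<in> ?A" "?f ww = ?f ww'"
    then show "ww = ww'"
      using product_word_inj[of "fst ww" n m "fst ww'" "snd ww" m2 "snd ww'" P Q]
      by (simp add: mem_Times_iff case_prod_beta prod_eq_iff)
  qed
  moreover have "?f ` ?A \<subseteq> ?B"
  proof (rule image_subsetI)
    fix ww assume "ww \<in> ?A"
    then show "?f ww \<in> ?B"
      using product_word_in_PiE[of "fst ww" n m "snd ww" m2 P Q] by (simp add: mem_Times_iff case_prod_beta)
  qed
  moreover have "card ?A = card ?B"
    by (simp add: card_cartesian_product card_PiE power_mult_distrib)
  ultimately have "?f ` ?A = ?B"
    by (intro card_subset_eq) (simp_all add: card_image finite_PiE)
  with \<open>inj_on ?f ?A\<close> show ?thesis by (simp add: bij_betw_def)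
qed

lemma Ncount_product_type:
  assumes "0 < m" "p \<in> Sn n"
  shows "Ncount n (m2 * m) (product_type m P Q) p =
    (\<Sum>s\<in>Sn n. \<Sum>t\<in>Sn n. if s \<circ> t = p then Ncount n m P s * Ncount n m2 Q t else 0)"
proof -
  let ?E1 = "{1..n} \<rightarrow>\<^sub>E {..<m}" and ?E2 = "{1..n} \<rightarrow>\<^sub>E {..<m2}"
  let ?S = "{ww \<in> ?E1 \<times> ?E2. std n P (fst ww) \<circ> std n Q (snd ww) = p}"
  let ?g = "\<lambda>ww. (std n P (fst ww), std n Q (snd ww))"
  have "Ncount n (m2 * m) (product_type m P Q) p =
      card {W \<in> {1..n} \<rightarrow>\<^sub>E {..<m2 * m}. std n (product_type m P Q) W = p}"
    by (rule Ncount_eq_card_std[OF assms(2)])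
  also have "\<dots> = card {ww \<in> ?E1 \<times> ?E2.
      std n (product_type m P Q) ((\<lambda>(w1, w2). product_word n m P Q w1 w2) ww) = p}"
    by (rule card_Collect_bij_betw[OF bij_betw_product_word[OF assms(1)], symmetric])
  also have "{ww \<in> ?E1 \<times> ?E2.
      std n (product_type m P Q) ((\<lambda>(w1, w2). product_word n m P Q w1 w2) ww) = p} = ?S"
    by (rule Collect_cong) (auto simp: std_product_word)
  also have "card ?S = (\<Sum>st\<in>Sn n \<times> Sn n. card {ww \<in> ?S. ?g ww = st})"
  proof (rule card_eq_sum_card_fibres)
    show "finite ?S" by (rule finite_subset[of _ "?E1 \<times> ?E2"]) (auto intro: finite_PiE)
  qed (auto simp: finite_Sn std_in_Sn)
  also have "\<dots> = (\<Sum>(s, t)\<in>Sn n \<times> Sn n. if s \<circ> t = p then Ncount n m P s * Ncount n m2 Q t else 0)"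
  proof (rule sum.cong[OF refl], clarify)
    fix s t assume st: "s \<in> Sn n" "t \<in> Sn n"
    show "card {ww \<in> ?S. ?g ww = (s, t)} =
        (if s \<circ> t = p then Ncount n m P s * Ncount n m2 Q t else 0)"
    proof (cases "s \<circ> t = p")
      case True
      then have "{ww \<in> ?S. ?g ww = (s, t)} = {w \<in> ?E1. std n P w = s} \<times> {w \<in> ?E2. std n Q w = t}"
        by auto
      with True show ?thesis
        by (simp add: card_cartesian_product Ncount_eq_card_std[OF st(1)] Ncount_eq_card_std[OF st(2)])
    next
      case False
      then have "{ww \<in> ?S. ?g ww = (s, t)} = {}" by auto
      then show ?thesis using False by (simp only: card.empty if_False)
    qed
  qed
  finally show ?thesis by (simp add: sum.cartesian_product)
qed

lemma product_type_parity:
  assumes "odd m"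
  shows "product_type m (\<lambda>z. even z = b) (\<lambda>z. even z = c) = (\<lambda>z. even z = (b = c))"
proof
  fix z
  define x r where "x = z div m" and "r = z mod m"
  have "r < m" using assms odd_pos by (auto simp: r_def)
  have z: "z = x * m + r" by (simp add: x_def r_def)
  have "even z \<longleftrightarrow> (even x \<longleftrightarrow> even r)"
    using assms unfolding z by simp
  moreover have "even (twist m c r) \<longleftrightarrow> even r" for c
    using \<open>r < m\<close> assms by (auto simp: twist_def even_diff_nat)
  ultimately show "product_type m (\<lambda>z. even z = b) (\<lambda>z. even z = c) z = (even z = (b = c))"
    unfolding product_type_def x_def[symmetric] r_def[symmetric] by auto
qed

section \<open>The multiplication rule\<close>

lemma poly_in_eq_0_on_grid:
  fixes F :: "'a::idom \<Rightarrow> 'a \<Rightarrow> 'a"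
  assumes "infinite S"
    and "\<And>x. poly_in (\<lambda>y. y) (F x)" "\<And>y. poly_in (\<lambda>x. x) (\<lambda>x. F x y)"
    and "\<And>x y. x \<in> S \<Longrightarrow> y \<in> S \<Longrightarrow> F x y = 0"
  shows "F x y = 0"
proof -
  have "F x' y = 0" if "x' \<in> S" for x'
    using poly_in_eq_0_if_infinite_roots[OF assms(2) assms(1)] assms(4)[OF that] by blast
  then show ?thesis
    using poly_in_eq_0_if_infinite_roots[OF assms(3) assms(1)] by blast
qed

lemma infinite_odd_grid: "infinite ((\<lambda>k. 2 * of_nat k + 1 :: 'a::linordered_field) ` {1..})"
proof -
  have "inj_on (\<lambda>k. 2 * of_nat k + 1 :: 'a) {1..}" by (rule inj_onI) simp
  then show ?thesis by (simp add: finite_image_iff infinite_Ici)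
qed

lemma Omega_poly_parity_product:
  assumes "1 \<le> n" "p \<in> Sn n" "1 \<le> k1" "1 \<le> k2" and K: "2 * K + 1 = (2 * k2 + 1) * (2 * k1 + 1)"
  shows "(\<Sum>s\<in>Sn n. \<Sum>t\<in>Sn n. if s \<circ> t = p then
      poly (Omega_poly n (\<lambda>z. even z = b) s) (of_nat k1) *
      poly (Omega_poly n (\<lambda>z. even z = c) t) (of_nat k2) else 0) =
    poly (Omega_poly n (\<lambda>z. even z = (b = c)) p) (of_nat K)"
proof -
  let ?P = "\<lambda>z. even z = b" and ?Q = "\<lambda>z. even z = c"
  have "1 \<le> K" using K assms(3,4) by (auto simp: algebra_simps)
  have "Ncount n (2 * K + 1) (\<lambda>z. even z = (b = c)) p =
      (\<Sum>s\<in>Sn n. \<Sum>t\<in>Sn n. if s \<circ> t = p then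
        Ncount n (2 * k1 + 1) ?P s * Ncount n (2 * k2 + 1) ?Q t else 0)"
    using Ncount_product_type[of "2 * k1 + 1" p n "2 * k2 + 1" ?P ?Q, folded K] assms(2)
    by (simp add: product_type_parity)
  then show ?thesis
    using assms \<open>1 \<le> K\<close>
    by (simp add: poly_Omega_poly of_nat_sum if_distrib[of of_nat] cong: if_cong)
qed

lemma gmult_rho_parity:
  assumes "1 \<le> n"
  shows "gmult n (rho n (\<lambda>z. even z = b) x) (rho n (\<lambda>z. even z = c) y) =
    rho n (\<lambda>z. even z = (b = c)) (x * y)"
proof
  fix p
  let ?A = "Omega_poly n (\<lambda>z. even z = b)" and ?B = "Omega_poly n (\<lambda>z. even z = c)"
    and ?C = "Omega_poly n (\<lambda>z. even z = (b = c))"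
  show "gmult n (rho n (\<lambda>z. even z = b) x) (rho n (\<lambda>z. even z = c) y) p =
      rho n (\<lambda>z. even z = (b = c)) (x * y) p"
  proof (cases "p \<in> Sn n")
    case False
    then show ?thesis by (simp add: gmult_def rho_def)
  next
    case p: True
    define F where "F x y = (\<Sum>s\<in>Sn n. \<Sum>t\<in>Sn n. if s \<circ> t = p then
        poly (?A s) ((x - 1) / 2) * poly (?B t) ((y - 1) / 2) else 0) - poly (?C p) ((x * y - 1) / 2)"
      for x y :: rat
    have "F x y = 0"
    proof (rule poly_in_eq_0_on_grid[OF infinite_odd_grid, where F = F])
      show "poly_in (\<lambda>y. y) (F x)" for x
        unfolding F_def
        by (intro poly_in_diff poly_in_sum poly_in_if poly_in_mult poly_in_const poly_in_poly
            poly_in_divide poly_in_self)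
      show "poly_in (\<lambda>x. x) (\<lambda>x. F x y)" for y
        unfolding F_def
        by (intro poly_in_diff poly_in_sum poly_in_if poly_in_mult poly_in_const poly_in_poly
            poly_in_divide poly_in_self)
      fix x y :: rat
      assume "x \<in> (\<lambda>k. 2 * of_nat k + 1) ` {1..}" "y \<in> (\<lambda>k. 2 * of_nat k + 1) ` {1..}"
      then obtain k1 k2 where k: "1 \<le> k1" "1 \<le> k2" "x = 2 * of_nat k1 + 1" "y = 2 * of_nat k2 + 1"
        by auto
      then have e: "(x - 1) / 2 = of_nat k1" "(y - 1) / 2 = of_nat k2"
          "(x * y - 1) / 2 = of_nat (2 * k1 * k2 + k1 + k2)"
        by (simp_all add: algebra_simps)
      have K: "2 * (2 * k1 * k2 + k1 + k2) + 1 = (2 * k2 + 1) * (2 * k1 + 1)"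
        by (simp add: algebra_simps)
      show "F x y = 0"
        unfolding F_def e Omega_poly_parity_product[OF assms p k(1,2) K] by simp
    qed
    then show ?thesis
      using p by (simp add: F_def gmult_def rho_def cong: if_cong)
  qed
qed

theorem theorem3p3:
  fixes n :: nat
  assumes "n \<ge> 1"
  shows "\<forall>x y :: rat.
           gmult n (rho_l n x) (rho_l n y) = rho_l n (x * y) \<and>
           gmult n (rho_r n x) (rho_r n y) = rho_l n (x * y) \<and>
           gmult n (rho_l n x) (rho_r n y) = rho_r n (x * y) \<and>
           gmult n (rho_r n x) (rho_l n y) = rho_r n (x * y)"
proof -
  have l: "rho_l n = rho n (\<lambda>z. even z = True)" and r: "rho_r n = rho n (\<lambda>z. even z = False)"
    by (simp_all add: rho_l_eq rho_r_eq)
  show ?thesis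
    unfolding l r gmult_rho_parity[OF assms] by simp
qed

end
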